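(* Let $(X,d)$ be a metric space, let $k\ge1$, let $p_1,\dots,p_k\in X$, and define $$\mu_P(x,y)=\prod_{i=1}^k\big[d(x,y)+\sqrt{d(x,p_i)d(y,p_i)}\big],\qquad x,y\in X.$$ Then for all $x,y,z\in X$, $$\mu_P(x,y)\leq \Big(\frac{27}{2}\Big)^k\big(\mu_P(x,z)+\mu_P(z,y)\big).$$ Moreover, for all $x,y,z,w\in X$, $$\mu_P(x,y)\mu_P(z,w)\leq 4\Big(\frac{27}{2}\Big)^{2k}\max\{\mu_P(x,z)\mu_P(y,w),\ \mu_P(x,w)\mu_P(y,z)\}.$$ *)

theory Defs
  imports "HOL-Analysis.Analysis"
begin

definition muP :: "nat \<Rightarrow> (nat \<Rightarrow> 'a::metric_space) \<Rightarrow> 'a \<Rightarrow> 'a \<Rightarrow> real" where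
  "muP k p x y = (\<Prod>i=1..k. dist x y + sqrt (dist x (p i) * dist y (p i)))"

end

theory Submission
  imports Defs
begin

text \<open>Each factor \<open>d(x,y) + sqrt (d(x,p) d(y,p))\<close> of \<open>\<mu>\<^sub>P\<close> grows by at most a factor 5
  when \<open>y\<close> is replaced by a point \<open>z\<close> with \<open>d(x,y) \<le> 2 d(x,z)\<close>. One of \<open>d(x,y) \<le> 2 d(x,z)\<close>
  and \<open>d(x,y) \<le> 2 d(y,z)\<close> always holds, and which one does not depend on \<open>p\<close>; so \<open>\<mu>\<^sub>P\<close> is a
  \<open>5\<^sup>k\<close>-quasi-ultrametric. A nonnegative symmetric \<open>K\<close>-quasi-ultrametric satisfies the
  four-point inequality with constant \<open>K\<^sup>2\<close>, and \<open>5 \<le> 27/2\<close>.\<close>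

lemma le_two_mult_add_sqrt:
  fixes a c s :: real
  assumes "0 \<le> a" "0 \<le> c" "0 \<le> s" "a \<le> s + c"
  shows "a \<le> 2 * s + 2 * sqrt (a * c)"
proof (cases "a \<le> 2 * c")
  case True
  then have "a * a \<le> a * (2 * c)"
    using assms by (intro mult_left_mono) auto
  moreover have "0 \<le> a * c" using assms by simp
  ultimately have "(a / 2)\<^sup>2 \<le> a * c"
    by (simp add: power2_eq_square)
  then have "a / 2 \<le> sqrt (a * c)" by (rule real_le_rsqrt)
  then show ?thesis using assms by linarith
next
  case False
  moreover have "0 \<le> sqrt (a * c)" using assms by simp
  ultimately show ?thesis using assms by linarith
qed

lemma dist_add_sqrt_le_5:
  fixes x y z q :: "'a::metric_space"
  assumes "dist x y \<le> 2 * dist x z"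
  shows "dist x y + sqrt (dist x q * dist y q) \<le> 5 * (dist x z + sqrt (dist x q * dist z q))"
proof -
  have "sqrt (dist x q * dist y q) \<le> (dist x q + dist y q) / 2"
    by (rule arith_geo_mean_sqrt) auto
  also have "\<dots> \<le> dist x q + dist x y / 2"
    using dist_triangle[of y q x] by (simp add: dist_commute)
  finally have "dist x y + sqrt (dist x q * dist y q) \<le> 3 * dist x z + dist x q"
    using assms by linarith
  also have "\<dots> \<le> 5 * dist x z + 2 * sqrt (dist x q * dist z q)"
    using le_two_mult_add_sqrt[of "dist x q" "dist z q" "dist x z"] dist_triangle[of x q z]
    by simp
  also have "\<dots> \<le> 5 * (dist x z + sqrt (dist x q * dist z q))"
    by simp
  finally show ?thesis .
qed

lemma muP_nonneg: "0 \<le> muP k p x y"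
  unfolding muP_def by (intro prod_nonneg) auto

lemma muP_sym: "muP k p x y = muP k p y x"
  unfolding muP_def by (simp add: dist_commute mult.commute)

lemma muP_le_if_dist_le:
  assumes "dist x y \<le> 2 * dist x z"
  shows "muP k p x y \<le> 5 ^ k * muP k p x z"
proof -
  have "muP k p x y \<le> (\<Prod>i=1..k. 5 * (dist x z + sqrt (dist x (p i) * dist z (p i))))"
    unfolding muP_def by (intro prod_mono ballI conjI add_nonneg_nonneg dist_add_sqrt_le_5 assms) auto
  also have "\<dots> = 5 ^ k * muP k p x z"
    unfolding muP_def prod.distrib by simp
  finally show ?thesis .
qed

lemma muP_quasi_ultrametric: "muP k p x y \<le> 5 ^ k * max (muP k p x z) (muP k p z y)"
proof (cases "dist x y \<le> 2 * dist x z")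
  case True
  then have "muP k p x y \<le> 5 ^ k * muP k p x z" by (rule muP_le_if_dist_le)
  then show ?thesis by (rule order_trans) (simp add: mult_left_mono)
next
  case False
  then have "dist y x \<le> 2 * dist y z"
    using dist_triangle[of x y z] by (simp add: dist_commute)
  then have "muP k p x y \<le> 5 ^ k * muP k p z y"
    by (metis muP_le_if_dist_le muP_sym)
  then show ?thesis by (rule order_trans) (simp add: mult_left_mono)
qed

lemma min_max_mult_le_max_mult_if_maximal:
  fixes A B C D :: real
  assumes "0 \<le> B" "0 \<le> C" "0 \<le> D" "B \<le> A" "C \<le> A" "D \<le> A"
  shows "min (max A D) (max C B) * min (max A C) (max D B) \<le> max (A * B) (C * D)"
proof -
  have "min (max A D) (max C B) * min (max A C) (max D B) \<le> max C B * max D B"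
    using assms by (intro mult_mono) auto
  also have "\<dots> \<le> max (A * B) (C * D)"
  proof -
    consider "C \<le> B" | "D \<le> B" | "B < C" "B < D" by linarith
    then show ?thesis
    proof cases
      case 1
      then have "max C B * max D B \<le> B * A" using assms by (intro mult_mono) auto
      then show ?thesis by (simp add: mult.commute)
    next
      case 2
      then have "max C B * max D B \<le> A * B" using assms by (intro mult_mono) auto
      then show ?thesis by simp
    qed simp
  qed
  finally show ?thesis .
qed

text \<open>The left-hand side is invariant under swapping \<open>A\<close> with \<open>B\<close>, \<open>C\<close> with \<open>D\<close>, and the
  pair \<open>(A, B)\<close> with \<open>(C, D)\<close>; so we may assume that \<open>A\<close> is the largest of the four.\<close>

lemma min_max_mult_le_max_mult:
  fixes A B C D :: real
  assumes "0 \<le> A" "0 \<le> B" "0 \<le> C" "0 \<le> D"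
  shows "min (max A D) (max C B) * min (max A C) (max D B) \<le> max (A * B) (C * D)"
proof -
  consider "B \<le> A" "C \<le> A" "D \<le> A" | "A \<le> B" "C \<le> B" "D \<le> B"
    | "A \<le> C" "B \<le> C" "D \<le> C" | "A \<le> D" "B \<le> D" "C \<le> D"
    by linarith
  then show ?thesis
  proof cases
    case 1
    then show ?thesis using assms by (intro min_max_mult_le_max_mult_if_maximal) auto
  next
    case 2
    then show ?thesis using assms min_max_mult_le_max_mult_if_maximal[of A C D B]
      by (simp add: ac_simps)
  next
    case 3
    then show ?thesis using assms min_max_mult_le_max_mult_if_maximal[of D A B C]
      by (simp add: ac_simps)
  next
    case 4
    then show ?thesis using assms min_max_mult_le_max_mult_if_maximal[of C B A D]
      by (simp add: ac_simps)
  qed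
qed

lemma quasi_ultrametric_four_point:
  fixes m :: "'a \<Rightarrow> 'a \<Rightarrow> real"
  assumes nonneg: "\<And>x y. 0 \<le> m x y"
    and sym: "\<And>x y. m x y = m y x"
    and quasi_ultrametric: "\<And>x y z. m x y \<le> K * max (m x z) (m z y)"
    and "0 \<le> K"
  shows "m x y * m z w \<le> K\<^sup>2 * max (m x z * m y w) (m x w * m y z)"
proof -
  have "m x y \<le> K * min (max (m x z) (m y z)) (max (m x w) (m y w))"
    using quasi_ultrametric[of x y z] quasi_ultrametric[of x y w] by (simp add: sym[of _ y])
  moreover have "m z w \<le> K * min (max (m x z) (m x w)) (max (m y z) (m y w))"
    using quasi_ultrametric[of z w x] quasi_ultrametric[of z w y] by (simp add: sym[of _ z])
  ultimately have "m x y * m z w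
      \<le> (K * min (max (m x z) (m y z)) (max (m x w) (m y w)))
        * (K * min (max (m x z) (m x w)) (max (m y z) (m y w)))"
    using nonneg \<open>0 \<le> K\<close> by (intro mult_mono mult_nonneg_nonneg) (auto simp: le_max_iff_disj)
  also have "\<dots> = K\<^sup>2 * (min (max (m x z) (m y z)) (max (m x w) (m y w))
              * min (max (m x z) (m x w)) (max (m y z) (m y w)))"
    by (simp add: power2_eq_square)
  also have "\<dots> \<le> K\<^sup>2 * max (m x z * m y w) (m x w * m y z)"
    using min_max_mult_le_max_mult[of "m x z" "m y w" "m x w" "m y z"] nonneg
    by (intro mult_left_mono) (simp_all add: ac_simps)
  finally show ?thesis .
qed

theorem lemma3p5:
  fixes p :: "nat \<Rightarrow> 'a::metric_space" and k :: nat
  assumes "k \<ge> 1"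
  shows "(\<forall>x y z. muP k p x y \<le> (27/2) ^ k * (muP k p x z + muP k p z y)) \<and>
         (\<forall>x y z w. muP k p x y * muP k p z w
           \<le> 4 * (27/2) ^ (2*k) * max (muP k p x z * muP k p y w) (muP k p x w * muP k p y z))"
proof (intro conjI allI)
  fix x y z w
  have "muP k p x y \<le> 5 ^ k * max (muP k p x z) (muP k p z y)"
    by (rule muP_quasi_ultrametric)
  also have "\<dots> \<le> (27/2) ^ k * max (muP k p x z) (muP k p z y)"
    by (intro mult_right_mono power_mono) (auto simp: le_max_iff_disj muP_nonneg)
  also have "\<dots> \<le> (27/2) ^ k * (muP k p x z + muP k p z y)"
    by (intro mult_left_mono) (auto simp: muP_nonneg)
  finally show "muP k p x y \<le> (27/2) ^ k * (muP k p x z + muP k p z y)" .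
  have "((5::real) ^ k)\<^sup>2 = 25 ^ k"
    by (simp flip: power_mult_distrib add: power2_eq_square)
  also have "\<dots> \<le> (27/2) ^ (2*k)"
    unfolding power_mult by (rule power_mono) (auto simp: power2_eq_square)
  also have "\<dots> \<le> 4 * (27/2) ^ (2*k)" by simp
  finally have constant_le: "((5::real) ^ k)\<^sup>2 \<le> 4 * (27/2) ^ (2*k)" .
  have "muP k p x y * muP k p z w
      \<le> (5 ^ k)\<^sup>2 * max (muP k p x z * muP k p y w) (muP k p x w * muP k p y z)"
    by (rule quasi_ultrametric_four_point) (auto intro: muP_nonneg muP_sym muP_quasi_ultrametric)
  also have "\<dots> \<le> 4 * (27/2) ^ (2*k) * max (muP k p x z * muP k p y w) (muP k p x w * muP k p y z)"
    using constant_le by (rule mult_right_mono) (simp add: le_max_iff_disj muP_nonneg)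
  finally show "muP k p x y * muP k p z w
      \<le> 4 * (27/2) ^ (2*k) * max (muP k p x z * muP k p y w) (muP k p x w * muP k p y z)" .
qed

end
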